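(* Fix $0<\eta<1$ and constants $A_\eta,a_\eta>0$. Consider any $D\ge2$ and any family $\{\Phi_{j,\kappa}\}_{j\in J,\kappa\in\mathbb{Z}_{\ge0}}$ of functions $\Phi_{j,\kappa}\in C^\infty(\mathbb{R})$ supported in $[-D/2,D/2]$ with $\|\Phi_{j,\kappa}\|_{L^2(\mathbb{R})}=1$, together with numbers $0<\delta_j\le D$ ($j\in J$), such that, with $\xi_{j,\kappa}=\frac{2\kappa+1}{4\delta_j}$, for all $j,\kappa$ and all $\xi\in\mathbb{R}$ $$ |\hat\Phi_{j,\kappa}(\xi)|\le \delta_j^{1/2}A_\eta\Big(\exp\big(-a_\eta(\delta_j|\xi-\xi_{j,\kappa}|)^{1-\eta}\big)+\exp\big(-a_\eta(\delta_j|\xi+\xi_{j,\kappa}|)^{1-\eta}\big)\Big). $$ Then for all $T_1,T_2\ge0$ and $n\ge0$ there exist constants $C,c>0$, depending only on $T_1,T_2,n,\eta,A_\eta,a_\eta$ (not on $D$, the family, $j$ or $\kappa$), such that whenever $\kappa<\delta_j-C\log^{1/(1-\eta)}(D)$ and $|\xi|>\frac12$, $$ |\hat\Phi_{j,\kappa}^{(n)}(\xi)|\le \frac{c}{D^{T_1}|\xi|^{T_2}}. $$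
   Context: The Fourier transform is $\hat \Phi(\xi)=\int_{\mathbb{R}} \Phi(x)e^{-2\pi i x\xi}\,dx$, and $\hat\Phi^{(n)}$ denotes its $n$-th derivative ($\hat\Phi^{(0)}=\hat\Phi$). *)

theory Defs
  imports "HOL-Analysis.Analysis"
begin

definition fourier :: "(real \<Rightarrow> complex) \<Rightarrow> real \<Rightarrow> complex" where
  "fourier \<Phi> \<xi> = integral UNIV (\<lambda>x. \<Phi> x * cis (- 2 * pi * x * \<xi>))"

definition higher_vderiv :: "nat \<Rightarrow> (real \<Rightarrow> complex) \<Rightarrow> real \<Rightarrow> complex" where
  "higher_vderiv n f = ((\<lambda>g x. vector_derivative g (at x)) ^^ n) f"

definition smooth_fun :: "(real \<Rightarrow> complex) \<Rightarrow> bool" where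
  "smooth_fun f \<longleftrightarrow> (\<forall>k x. higher_vderiv k f differentiable (at x))"

end

theory Submission
  imports Defs
begin

text \<open>As $\Phi$ is supported in $[-R, R]$ with $R = D/2$, $\hat\Phi^{(n)}(\xi)$ is the integral of
  $(-2\pi i x)^n \Phi(x) e^{-2\pi i x\xi}$, and comparing $(i\varphi)^n$ with $(e^{i\varphi} - 1)^n$ for
  $\varphi = -2\pi x\sigma$ shows that $\sigma^n\hat\Phi^{(n)}(\xi)$ differs from the forward difference
  $\sum_k \binom nk (-1)^{n-k}\hat\Phi(\xi + k\sigma)$ by at most $n(2\pi\sigma R)^{n+1}\|\Phi\|_1$,
  where $\|\Phi\|_1 \le R + \frac12$ by the $L^2$ normalisation.
  The condition on $\kappa$ keeps the peaks $\pm\xi_\kappa$ of the assumed envelope away from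
  $|\xi| > \frac12$ by a margin of order $\log^{1/(1-\eta)} D$, so at all sample points the envelope is at
  most $\sqrt D\, e^{-\frac a2(2|\xi|-1)^{1-\eta}} D^{-N}$ with $N$ as large as the choice of $C$ allows.
  Taking $\sigma = (4(n+1)(2D|\xi|)^M)^{-1}$ for large $M$ makes $\sigma^{-n}$ times both the
  remainder and the forward difference $O(D^{-T_1}|\xi|^{-T_2})$.\<close>

definition fourier_moment :: "(real \<Rightarrow> complex) \<Rightarrow> real \<Rightarrow> nat \<Rightarrow> real \<Rightarrow> complex" where
  "fourier_moment \<Phi> R k \<xi> =
     integral {-R..R} (\<lambda>x. (- 2 * pi * \<i> * complex_of_real x) ^ k * \<Phi> x * cis (- 2 * pi * x * \<xi>))"

lemma has_vector_derivative_cis_linear: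
  "((\<lambda>\<xi>::real. cis (- 2 * pi * x * \<xi>)) has_vector_derivative
     (- 2 * pi * \<i> * complex_of_real x) * cis (- 2 * pi * x * \<xi>)) (at \<xi> within U)"
proof -
  have "((\<lambda>\<xi>::real. - 2 * pi * x * \<xi>) has_derivative (\<lambda>t. (- 2 * pi * x) * t)) (at \<xi> within U)"
    by (auto intro!: derivative_eq_intros)
  from has_derivative_cis[OF this] show ?thesis
    unfolding has_vector_derivative_def by (simp add: scaleR_conv_of_real algebra_simps)
qed

lemma fourier_moment_has_vector_derivative:
  assumes "continuous_on UNIV \<Phi>"
  shows "(fourier_moment \<Phi> R k has_vector_derivative fourier_moment \<Phi> R (Suc k) \<xi>) (at \<xi>)"
proof -
  have "((\<lambda>\<xi>. integral (cbox (-R) R)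
            (\<lambda>x. (- 2 * pi * \<i> * complex_of_real x) ^ k * \<Phi> x * cis (- 2 * pi * x * \<xi>)))
     has_vector_derivative integral (cbox (-R) R)
            (\<lambda>x. (- 2 * pi * \<i> * complex_of_real x) ^ Suc k * \<Phi> x * cis (- 2 * pi * x * \<xi>)))
     (at \<xi> within UNIV)"
  proof (rule leibniz_rule_vector_derivative[where
        fx = "\<lambda>\<xi> x. (- 2 * pi * \<i> * complex_of_real x) ^ Suc k * \<Phi> x * cis (- 2 * pi * x * \<xi>)"])
    fix \<xi>' x :: real
    show "((\<lambda>\<xi>. (- 2 * pi * \<i> * complex_of_real x) ^ k * \<Phi> x * cis (- 2 * pi * x * \<xi>))
          has_vector_derivative
          (- 2 * pi * \<i> * complex_of_real x) ^ Suc k * \<Phi> x * cis (- 2 * pi * x * \<xi>')) (at \<xi>' within UNIV)"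
      using has_vector_derivative_mult_right[OF has_vector_derivative_cis_linear[of x \<xi>' UNIV],
          of "(- 2 * pi * \<i> * complex_of_real x) ^ k * \<Phi> x"]
      by (simp add: algebra_simps)
  next
    fix \<xi>' :: real
    show "(\<lambda>x. (- 2 * pi * \<i> * complex_of_real x) ^ k * \<Phi> x * cis (- 2 * pi * x * \<xi>'))
            integrable_on cbox (- R) R"
      by (intro integrable_continuous continuous_intros continuous_on_subset[OF assms]) auto
  next
    have "continuous_on (UNIV \<times> cbox (-R) R) (\<lambda>p. \<Phi> (snd p))"
      by (intro continuous_on_compose2[OF assms] continuous_intros) auto
    then show "continuous_on (UNIV \<times> cbox (- R) R)
        (\<lambda>(\<xi>, x). (- 2 * pi * \<i> * complex_of_real x) ^ Suc k * \<Phi> x * cis (- 2 * pi * x * \<xi>))"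
      by (simp add: split_beta) (intro continuous_intros; simp)
  qed auto
  then show ?thesis unfolding fourier_moment_def by simp
qed

lemma integral_restrict_support:
  fixes f :: "real \<Rightarrow> 'a::banach"
  assumes "\<And>x. \<bar>x\<bar> > R \<Longrightarrow> f x = 0"
  shows "integral UNIV f = integral {-R..R} f"
proof -
  have "f x = (if x \<in> {-R..R} then f x else 0)" for x
  proof (cases "x \<in> {-R..R}")
    case False
    then have "R < \<bar>x\<bar>" by auto
    with False show ?thesis by (simp add: assms)
  qed simp
  then have "integral UNIV f = integral UNIV (\<lambda>x. if x \<in> {-R..R} then f x else 0)"
    by (intro arg_cong[where f="integral UNIV"] ext)
  then show ?thesis by (simp only: integral_restrict_UNIV)
qed

lemma fourier_eq_fourier_moment_0:
  assumes "\<And>x. \<bar>x\<bar> > R \<Longrightarrow> \<Phi> x = 0"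
  shows "fourier \<Phi> \<xi> = fourier_moment \<Phi> R 0 \<xi>"
  unfolding fourier_def fourier_moment_def
  by (subst integral_restrict_support[where R=R]) (simp_all add: assms)

lemma higher_vderiv_Suc:
  "higher_vderiv (Suc k) f = (\<lambda>x. vector_derivative (higher_vderiv k f) (at x))"
  unfolding higher_vderiv_def by simp

lemma higher_vderiv_fourier:
  assumes "continuous_on UNIV \<Phi>" and "\<And>x. \<bar>x\<bar> > R \<Longrightarrow> \<Phi> x = 0"
  shows "higher_vderiv k (fourier \<Phi>) = fourier_moment \<Phi> R k"
proof (induction k)
  case 0
  show ?case unfolding higher_vderiv_def using fourier_eq_fourier_moment_0[OF assms(2)] by auto
next
  case (Suc k)
  show ?case unfolding higher_vderiv_Suc Suc
    using fourier_moment_has_vector_derivative[OF assms(1)] vector_derivative_at by blast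
qed

lemma smooth_fun_imp_continuous_on:
  assumes "smooth_fun f"
  shows "continuous_on UNIV f"
proof (rule continuous_at_imp_continuous_on, rule ballI)
  fix x :: real
  have "higher_vderiv 0 f differentiable (at x)" using assms unfolding smooth_fun_def by blast
  then show "isCont f x" unfolding higher_vderiv_def by (simp add: differentiable_imp_continuous_within)
qed

lemma fourier_finite_difference:
  assumes cont: "continuous_on UNIV \<Phi>" and supp: "\<And>x. \<bar>x\<bar> > R \<Longrightarrow> \<Phi> x = 0"
  shows "(\<Sum>k\<le>n. of_nat (n choose k) * (-1) ^ (n - k) * fourier \<Phi> (\<xi> + real k * \<sigma>))
       = integral {-R..R} (\<lambda>x. (cis (- 2 * pi * x * \<sigma>) - 1) ^ n * \<Phi> x * cis (- 2 * pi * x * \<xi>))"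
proof -
  have cis_shift: "cis (- 2 * pi * x * \<xi>) * cis (- 2 * pi * x * \<sigma>) ^ k
      = cis (- 2 * pi * x * (\<xi> + real k * \<sigma>))" for x :: real and k :: nat
    by (simp only: Complex.DeMoivre cis_mult) (simp add: algebra_simps)
  have binomial: "(cis (- 2 * pi * x * \<sigma>) - 1) ^ n * \<Phi> x * cis (- 2 * pi * x * \<xi>)
     = (\<Sum>k\<le>n. of_nat (n choose k) * (-1) ^ (n - k) * (\<Phi> x * cis (- 2 * pi * x * (\<xi> + real k * \<sigma>))))"
    for x
  proof -
    have power: "(cis (- 2 * pi * x * \<sigma>) - 1) ^ n
        = (\<Sum>k\<le>n. of_nat (n choose k) * cis (- 2 * pi * x * \<sigma>) ^ k * (-1) ^ (n - k))"
      using binomial_ring[of "cis (- 2 * pi * x * \<sigma>)" "-1" n] by simp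
    show ?thesis
      unfolding power sum_distrib_right cis_shift[symmetric]
      by (intro sum.cong refl) (simp only: mult_ac)
  qed
  have "integral {-R..R} (\<lambda>x. (cis (- 2 * pi * x * \<sigma>) - 1) ^ n * \<Phi> x * cis (- 2 * pi * x * \<xi>))
     = (\<Sum>k\<le>n. integral {-R..R}
          (\<lambda>x. of_nat (n choose k) * (-1) ^ (n - k) * (\<Phi> x * cis (- 2 * pi * x * (\<xi> + real k * \<sigma>)))))"
    unfolding binomial
    by (rule integral_sum)
      (auto intro!: integrable_continuous_interval continuous_intros continuous_on_subset[OF cont])
  also have "\<dots> = (\<Sum>k\<le>n. of_nat (n choose k) * (-1) ^ (n - k) * fourier \<Phi> (\<xi> + real k * \<sigma>))"
    by (simp add: fourier_eq_fourier_moment_0[OF supp] fourier_moment_def)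
  finally show ?thesis by simp
qed

lemma norm_power_diff_le:
  fixes z w :: complex
  assumes "norm z \<le> r" "norm w \<le> r" "r > 0"
  shows "norm (z ^ n - w ^ n) \<le> n * r ^ (n - 1) * norm (z - w)"
proof -
  have "norm ((z / r) ^ n - (w / r) ^ n) \<le> n * norm (z / r - w / r)"
    by (rule norm_power_diff) (use assms in \<open>auto simp: norm_divide\<close>)
  then have "norm (z ^ n - w ^ n) / r ^ n \<le> n * (norm (z - w) / r)"
    using assms by (simp add: norm_divide norm_power power_divide diff_divide_distrib[symmetric])
  then have "norm (z ^ n - w ^ n) \<le> n * (norm (z - w) / r) * r ^ n"
    using assms by (simp add: field_simps)
  also have "\<dots> = n * r ^ (n - 1) * norm (z - w)"
    using assms by (cases n) (simp_all add: field_simps)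
  finally show ?thesis .
qed

lemma norm_cis_minus_1_le: "norm (cis \<phi> - 1) \<le> \<bar>\<phi>\<bar>"
  using Taylor_exp[of "\<i> * complex_of_real \<phi>" 0] by (simp add: cis_conv_exp norm_mult)

lemma norm_cis_minus_1_minus_linear_le: "norm (cis \<phi> - 1 - \<i> * complex_of_real \<phi>) \<le> \<phi>\<^sup>2"
  using Taylor_exp[of "\<i> * complex_of_real \<phi>" 1]
  by (simp add: cis_conv_exp norm_mult power2_eq_square diff_diff_add)

lemma norm_power_minus_power_cis_minus_1_le:
  assumes "\<bar>\<phi>\<bar> \<le> r" "r > 0"
  shows "norm ((\<i> * complex_of_real \<phi>) ^ n - (cis \<phi> - 1) ^ n) \<le> n * r ^ (n + 1)"
proof -
  have "norm ((\<i> * complex_of_real \<phi>) ^ n - (cis \<phi> - 1) ^ n)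
      \<le> n * r ^ (n - 1) * norm (cis \<phi> - 1 - \<i> * complex_of_real \<phi>)"
    using norm_power_diff_le[of "\<i> * complex_of_real \<phi>" r "cis \<phi> - 1" n]
      assms norm_cis_minus_1_le[of \<phi>]
    by (simp add: norm_mult norm_minus_commute)
  also have "\<dots> \<le> n * r ^ (n - 1) * r\<^sup>2"
  proof -
    have "\<phi>\<^sup>2 \<le> r\<^sup>2" using assms by (metis abs_ge_zero power2_abs power_mono)
    then show ?thesis
      using norm_cis_minus_1_minus_linear_le[of \<phi>] assms by (intro mult_left_mono) auto
  qed
  also have "\<dots> = n * r ^ (n + 1)"
    by (cases n) (simp_all add: power2_eq_square)
  finally show ?thesis .
qed

lemma fourier_moment_minus_finite_difference_le:
  assumes cont: "continuous_on UNIV \<Phi>" and supp: "\<And>x. \<bar>x\<bar> > R \<Longrightarrow> \<Phi> x = 0"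
    and R: "R > 0" and \<sigma>: "\<sigma> > 0"
  shows "norm (complex_of_real (\<sigma> ^ n) * fourier_moment \<Phi> R n \<xi>
      - (\<Sum>k\<le>n. of_nat (n choose k) * (-1) ^ (n - k) * fourier \<Phi> (\<xi> + real k * \<sigma>)))
    \<le> n * (2 * pi * \<sigma> * R) ^ (n + 1) * integral {-R..R} (\<lambda>x. cmod (\<Phi> x))"
proof -
  define r where "r = 2 * pi * \<sigma> * R"
  define \<phi> where "\<phi> x = - 2 * pi * x * \<sigma>" for x :: real
  define P where "P x = \<Phi> x * cis (- 2 * pi * x * \<xi>)" for x
  have contP: "continuous_on {-R..R} P"
    unfolding P_def by (intro continuous_intros continuous_on_subset[OF cont]) auto
  have moment: "complex_of_real (\<sigma> ^ n) * fourier_moment \<Phi> R n \<xi>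
      = integral {-R..R} (\<lambda>x. (\<i> * complex_of_real (\<phi> x)) ^ n * P x)"
  proof -
    have "complex_of_real (\<sigma> ^ n) * (- 2 * pi * \<i> * complex_of_real x) ^ n
        = (\<i> * complex_of_real (\<phi> x)) ^ n" for x
      unfolding \<phi>_def of_real_power power_mult_distrib[symmetric] by (simp add: algebra_simps)
    then show ?thesis
      unfolding fourier_moment_def P_def integral_mult_right[symmetric]
      by (intro arg_cong[where f="integral {-R..R}"] ext) (metis mult.assoc)
  qed
  have "(\<Sum>k\<le>n. of_nat (n choose k) * (-1) ^ (n - k) * fourier \<Phi> (\<xi> + real k * \<sigma>))
      = integral {-R..R} (\<lambda>x. (cis (- 2 * pi * x * \<sigma>) - 1) ^ n * \<Phi> x * cis (- 2 * pi * x * \<xi>))"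
    using cont supp by (rule fourier_finite_difference)
  then have difference: "(\<Sum>k\<le>n. of_nat (n choose k) * (-1) ^ (n - k) * fourier \<Phi> (\<xi> + real k * \<sigma>))
      = integral {-R..R} (\<lambda>x. (cis (\<phi> x) - 1) ^ n * P x)"
    unfolding \<phi>_def P_def by (simp add: mult.assoc)
  have "norm (integral {-R..R} (\<lambda>x. (\<i> * complex_of_real (\<phi> x)) ^ n * P x)
              - integral {-R..R} (\<lambda>x. (cis (\<phi> x) - 1) ^ n * P x))
      = norm (integral {-R..R} (\<lambda>x. ((\<i> * complex_of_real (\<phi> x)) ^ n - (cis (\<phi> x) - 1) ^ n) * P x))"
    unfolding \<phi>_def
    by (subst integral_diff[symmetric])
      (auto simp: algebra_simps intro!: integrable_continuous_interval continuous_intros contP)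
  also have "\<dots> \<le> integral {-R..R} (\<lambda>x. n * r ^ (n + 1) * cmod (\<Phi> x))"
  proof (rule integral_norm_bound_integral)
    show "(\<lambda>x. ((\<i> * complex_of_real (\<phi> x)) ^ n - (cis (\<phi> x) - 1) ^ n) * P x) integrable_on {-R..R}"
      unfolding \<phi>_def by (intro integrable_continuous_interval continuous_intros contP)
    show "(\<lambda>x. real n * r ^ (n + 1) * cmod (\<Phi> x)) integrable_on {-R..R}"
      by (intro integrable_continuous_interval continuous_intros continuous_on_subset[OF cont]) auto
  next
    fix x assume "x \<in> {-R..R}"
    then have "\<bar>\<phi> x\<bar> \<le> r"
      using \<sigma> unfolding \<phi>_def r_def by (auto simp: abs_mult intro!: mult_left_mono)
    from norm_power_minus_power_cis_minus_1_le[OF this, of n] show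
      "norm (((\<i> * complex_of_real (\<phi> x)) ^ n - (cis (\<phi> x) - 1) ^ n) * P x)
         \<le> real n * r ^ (n + 1) * cmod (\<Phi> x)"
      using R \<sigma> unfolding P_def norm_mult r_def by (simp add: mult_right_mono)
  qed
  finally show ?thesis unfolding moment difference r_def by simp
qed

lemma integral_norm_le_of_integral_square_eq_1:
  assumes cont: "continuous_on UNIV \<Phi>" and supp: "\<And>x. \<bar>x\<bar> > R \<Longrightarrow> \<Phi> x = 0"
    and R: "R > 0" and L2: "integral UNIV (\<lambda>x. (cmod (\<Phi> x))\<^sup>2) = 1"
  shows "integral {-R..R} (\<lambda>x. cmod (\<Phi> x)) \<le> R + 1/2"
proof -
  have L2': "integral {-R..R} (\<lambda>x. (cmod (\<Phi> x))\<^sup>2) = 1"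
    using L2 integral_restrict_support[of R "\<lambda>x. (cmod (\<Phi> x))\<^sup>2"] supp by simp
  have "integral {-R..R} (\<lambda>x. cmod (\<Phi> x)) \<le> integral {-R..R} (\<lambda>x. 1/2 + (cmod (\<Phi> x))\<^sup>2 / 2)"
  proof (rule integral_le)
    fix x
    have "0 \<le> (cmod (\<Phi> x) - 1)\<^sup>2" by simp
    then show "cmod (\<Phi> x) \<le> 1 / 2 + (cmod (\<Phi> x))\<^sup>2 / 2" by (simp add: power2_eq_square algebra_simps)
  qed (auto intro!: integrable_continuous_interval continuous_intros continuous_on_subset[OF cont])
  also have "\<dots> = R + 1/2"
    using R L2' by (subst integral_add)
      (auto intro!: integrable_continuous_interval continuous_intros continuous_on_subset[OF cont])
  finally show ?thesis .
qed

lemma higher_vderiv_fourier_le_sample_bound: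
  assumes cont: "continuous_on UNIV \<Phi>" and supp: "\<And>x. \<bar>x\<bar> > R \<Longrightarrow> \<Phi> x = 0"
    and R: "R > 0" and L2: "integral UNIV (\<lambda>x. (cmod (\<Phi> x))\<^sup>2) = 1" and \<sigma>: "\<sigma> > 0"
    and samples: "\<And>k. k \<le> n \<Longrightarrow> cmod (fourier \<Phi> (\<xi> + real k * \<sigma>)) \<le> B"
  shows "\<sigma> ^ n * cmod (higher_vderiv n (fourier \<Phi>) \<xi>)
     \<le> 2 ^ n * B + n * (2 * pi * \<sigma> * R) ^ (n + 1) * (R + 1/2)"
proof -
  have "norm (\<Sum>k\<le>n. of_nat (n choose k) * (-1) ^ (n - k) * fourier \<Phi> (\<xi> + real k * \<sigma>))
      \<le> (\<Sum>k\<le>n. real (n choose k) * cmod (fourier \<Phi> (\<xi> + real k * \<sigma>)))"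
    by (rule order_trans[OF norm_sum]) (simp add: norm_mult norm_power)
  also have "\<dots> \<le> (\<Sum>k\<le>n. real (n choose k) * B)"
    using samples by (intro sum_mono mult_left_mono) auto
  also have "\<dots> = 2 ^ n * B"
    by (simp add: sum_distrib_right[symmetric] choose_row_sum flip: of_nat_sum)
  finally have difference: "norm (\<Sum>k\<le>n. of_nat (n choose k) * (-1) ^ (n - k) * fourier \<Phi> (\<xi> + real k * \<sigma>))
      \<le> 2 ^ n * B" .
  have "integral {-R..R} (\<lambda>x. cmod (\<Phi> x)) \<le> R + 1/2"
    using cont supp R L2 by (rule integral_norm_le_of_integral_square_eq_1)
  then have "n * (2 * pi * \<sigma> * R) ^ (n + 1) * integral {-R..R} (\<lambda>x. cmod (\<Phi> x))
      \<le> n * (2 * pi * \<sigma> * R) ^ (n + 1) * (R + 1/2)"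
    using R \<sigma> by (intro mult_left_mono) auto
  moreover have "norm (complex_of_real (\<sigma> ^ n) * fourier_moment \<Phi> R n \<xi>
      - (\<Sum>k\<le>n. of_nat (n choose k) * (-1) ^ (n - k) * fourier \<Phi> (\<xi> + real k * \<sigma>)))
    \<le> n * (2 * pi * \<sigma> * R) ^ (n + 1) * integral {-R..R} (\<lambda>x. cmod (\<Phi> x))"
    using cont supp R \<sigma> by (rule fourier_moment_minus_finite_difference_le)
  moreover have "\<sigma> ^ n * cmod (higher_vderiv n (fourier \<Phi>) \<xi>)
      = norm (complex_of_real (\<sigma> ^ n) * fourier_moment \<Phi> R n \<xi>)"
    using \<sigma> higher_vderiv_fourier[OF cont, of R] supp by (simp add: norm_mult norm_power)
  ultimately show ?thesis
    using difference norm_triangle_sub[of "complex_of_real (\<sigma> ^ n) * fourier_moment \<Phi> R n \<xi>"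
        "\<Sum>k\<le>n. of_nat (n choose k) * (-1) ^ (n - k) * fourier \<Phi> (\<xi> + real k * \<sigma>)"]
    by linarith
qed

lemma power_div_fact_le_exp:
  fixes y :: real
  assumes "0 \<le> y"
  shows "y ^ m / fact m \<le> exp y"
proof -
  obtain t where t: "exp y = (\<Sum>i<Suc m. y ^ i / fact i) + exp t / fact (Suc m) * y ^ Suc m"
    using Maclaurin_exp_le[of y "Suc m"] by blast
  have "y ^ m / fact m \<le> (\<Sum>i<Suc m. y ^ i / fact i)"
    by (rule member_le_sum[where f="\<lambda>i. y ^ i / fact i"]) (use assms in auto)
  moreover have "0 \<le> exp t / fact (Suc m) * y ^ Suc m" using assms by simp
  ultimately show ?thesis using t by linarith
qed

lemma powr_mult_exp_neg_powr_bounded: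
  fixes b p N :: real
  assumes b: "b > 0" and p: "p > 0" and N: "N \<ge> 0"
  shows "\<exists>K>0. \<forall>u\<ge>0. (1 + u) powr N * exp (- b * u powr p) \<le> K"
proof -
  define m where "m = nat \<lceil>N / p\<rceil>"
  have "N / p \<le> real m" unfolding m_def by (rule real_nat_ceiling_ge)
  then have mN: "N \<le> real m * p" using p by (simp add: pos_divide_le_eq)
  define K where "K = 2 powr N * (1 + fact m / b ^ m)"
  have "(1 + u) powr N * exp (- b * u powr p) \<le> K" if u: "u \<ge> 0" for u
  proof (cases "u \<le> 1")
    case True
    have "(1 + u) powr N * exp (- b * u powr p) \<le> 2 powr N * 1"
      using True u N b by (intro mult_mono powr_mono2) auto
    moreover have "2 powr N * 1 \<le> K" unfolding K_def using b by (intro mult_left_mono) auto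
    ultimately show ?thesis by linarith
  next
    case False
    define y where "y = b * u powr p"
    have y: "y \<ge> 0" unfolding y_def using b u by simp
    have "(1 + u) powr N \<le> (2 * u) powr N" using False N by (intro powr_mono2) auto
    also have "\<dots> = 2 powr N * u powr N" using u by (simp add: powr_mult)
    also have "u powr N \<le> u powr (real m * p)" using False mN by (intro powr_mono) auto
    also have "u powr (real m * p) = y ^ m / b ^ m"
      unfolding y_def using False b
      by (simp add: powr_powr[symmetric] powr_realpow mult.commute power_mult_distrib)
    finally have "(1 + u) powr N \<le> 2 powr N * (y ^ m / b ^ m)" by simp
    moreover have power_exp: "y ^ m * exp (- y) \<le> fact m"
      using power_div_fact_le_exp[OF y, of m] by (simp add: exp_minus divide_simps mult.commute)
    ultimately have "(1 + u) powr N * exp (- y) \<le> 2 powr N * (y ^ m / b ^ m) * exp (- y)"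
      by (intro mult_right_mono) auto
    also have "\<dots> = 2 powr N * (y ^ m * exp (- y) / b ^ m)" by simp
    also have "\<dots> \<le> 2 powr N * (fact m / b ^ m)"
      using power_exp b by (intro mult_left_mono divide_right_mono) auto
    also have "\<dots> \<le> K" unfolding K_def by (intro mult_left_mono) auto
    finally show ?thesis unfolding y_def by simp
  qed
  moreover have "K > 0" unfolding K_def using b by (simp add: add_pos_nonneg)
  ultimately show ?thesis by blast
qed

lemma exp_neg_powr_le_split:
  fixes a p u v Z :: real
  assumes "0 \<le> a" "0 < p" "0 \<le> u" "0 \<le> v" "u \<le> Z" "v \<le> Z"
  shows "exp (- a * Z powr p) \<le> exp (- (a/2) * u powr p) * exp (- (a/2) * v powr p)"
proof -
  have "u powr p \<le> Z powr p" "v powr p \<le> Z powr p"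
    using assms by (auto intro!: powr_mono2)
  then have "(a/2) * u powr p + (a/2) * v powr p \<le> (a/2) * Z powr p + (a/2) * Z powr p"
    using assms(1) by (intro add_mono mult_left_mono) auto
  then show ?thesis by (simp add: exp_add[symmetric])
qed

definition frequency_envelope :: "real \<Rightarrow> real \<Rightarrow> real \<Rightarrow> real \<Rightarrow> nat \<Rightarrow> real \<Rightarrow> real" where
  "frequency_envelope A a p \<delta> \<kappa> \<xi> = sqrt \<delta> * A *
     (exp (- a * (\<delta> * \<bar>\<xi> - (2 * real \<kappa> + 1) / (4 * \<delta>)\<bar>) powr p)
    + exp (- a * (\<delta> * \<bar>\<xi> + (2 * real \<kappa> + 1) / (4 * \<delta>)\<bar>) powr p))"

text \<open>Since $\kappa < \delta - C\log^{1/p}D$, the peaks $\pm\xi_\kappa$ lie below $\frac12$ by a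
  margin of order $C\log^{1/p}D/\delta$; hence both exponents are at least
  $X = \delta(|\xi| - \frac12) + (C\log^{1/p}D - 1)/2$, and $X$ dominates both $2|\xi| - 1$
  and $\frac14 C\log^{1/p}D$.\<close>
lemma frequency_envelope_shift_le:
  fixes \<kappa> :: nat
  assumes p: "0 < p" and a: "0 \<le> a" and A: "0 \<le> A" and D: "2 \<le> D"
    and \<delta>: "0 < \<delta>" "\<delta> \<le> D"
    and CL: "2 \<le> C * ln D powr (1 / p)" and \<kappa>: "real \<kappa> < \<delta> - C * ln D powr (1 / p)"
    and \<xi>: "1/2 < \<bar>\<xi>\<bar>" and s: "0 \<le> s" "s \<le> 1 / (4 * D)"
  shows "frequency_envelope A a p \<delta> \<kappa> (\<xi> + s)
     \<le> 2 * sqrt D * A * exp (- (a/2) * (2 * \<bar>\<xi>\<bar> - 1) powr p) * D powr (- ((a/2) * (C/4) powr p))"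
proof -
  define L where "L = ln D powr (1 / p)"
  define q where "q = (2 * real \<kappa> + 1) / (4 * \<delta>)"
  define X where "X = \<delta> * \<bar>\<xi>\<bar> - \<delta> / 2 + (C * L - 1) / 2"
  have L: "0 \<le> L" "L powr p = ln D" "2 \<le> C * L" "real \<kappa> < \<delta> - C * L"
    using CL D p \<kappa> by (simp_all add: L_def powr_powr)
  have "\<delta> * s \<le> D * (1 / (4 * D))" using \<delta> s by (intro mult_mono) auto
  then have \<delta>s: "\<delta> * s \<le> 1/4" using D by simp
  have \<delta>q: "\<delta> * q = (2 * real \<kappa> + 1) / 4" unfolding q_def using \<delta> by simp
  have "\<delta> * (\<bar>\<xi>\<bar> - s) \<le> \<delta> * \<bar>\<xi> + s\<bar>" using \<delta> s by (intro mult_left_mono) arith+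
  then have X_le: "X \<le> \<delta> * \<bar>\<xi> + s\<bar> - \<delta> * q"
    using \<delta>s \<delta>q L(4) unfolding X_def right_diff_distrib by argo
  have X_le_scaled: "X \<le> \<delta> * y" if "\<bar>\<xi> + s\<bar> - q \<le> y" for y
    using mult_left_mono[OF that, of \<delta>] \<delta> X_le by (simp add: right_diff_distrib)
  have "0 \<le> q" unfolding q_def using \<delta> by simp
  then have dist: "X \<le> \<delta> * \<bar>\<xi> + s - q\<bar>" "X \<le> \<delta> * \<bar>\<xi> + s + q\<bar>"
    by (intro X_le_scaled; arith)+
  have "2 \<le> \<delta>" using L by linarith
  then have "2 * (\<bar>\<xi>\<bar> - 1/2) \<le> \<delta> * (\<bar>\<xi>\<bar> - 1/2)" using \<xi> by (intro mult_right_mono) auto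
  then have X1: "2 * \<bar>\<xi>\<bar> - 1 \<le> X" unfolding X_def using L(3) by (simp add: algebra_simps) argo
  have "\<delta> * (1/2) \<le> \<delta> * \<bar>\<xi>\<bar>" using \<delta> \<xi> by (intro mult_left_mono) auto
  then have X2: "C * L / 4 \<le> X" unfolding X_def using L(3) by argo
  have "0 < C * L" using L(3) by linarith
  then have "0 < C" using L(1) by (simp add: zero_less_mult_iff)
  then have "(C * L / 4) powr p = (C/4) powr p * ln D"
    using powr_mult[of "C/4" L p] L(1,2) by (simp add: mult.commute)
  then have "exp (- (a/2) * (C * L / 4) powr p) = D powr (- ((a/2) * (C/4) powr p))"
    using D by (simp add: powr_def)
  then have exp_bound: "exp (- a * Z powr p)
      \<le> exp (- (a/2) * (2 * \<bar>\<xi>\<bar> - 1) powr p) * D powr (- ((a/2) * (C/4) powr p))" if "X \<le> Z" for Z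
    using exp_neg_powr_le_split[OF a p, of "2 * \<bar>\<xi>\<bar> - 1" "C * L / 4" Z] that X1 X2 \<xi> L(3) by simp
  have "frequency_envelope A a p \<delta> \<kappa> (\<xi> + s)
      \<le> sqrt D * A * (2 * (exp (- (a/2) * (2 * \<bar>\<xi>\<bar> - 1) powr p) * D powr (- ((a/2) * (C/4) powr p))))"
    unfolding frequency_envelope_def q_def[symmetric]
    using exp_bound[OF dist(1)] exp_bound[OF dist(2)] \<delta> A
    by (intro mult_mono) (auto intro!: add_nonneg_nonneg)
  then show ?thesis by (simp add: algebra_simps)
qed

lemma finite_difference_sample_term_le:
  fixes D t A E N K T1 T2 S :: real and n M :: nat
  assumes D: "1 \<le> D" and t: "1 \<le> 2 * t" and T2: "0 \<le> T2" and A: "0 \<le> A" and E: "0 \<le> E"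
    and K: "(2 * t) powr (real n * M + T2) * E \<le> K"
    and N: "real n * M + 1/2 + T1 \<le> N"
    and S: "S = 4 * (real n + 1) * D ^ M * (2 * t) ^ M"
  shows "S ^ n * (2 ^ (n + 1) * (sqrt D * A * E * D powr (- N)))
    \<le> (4 * (real n + 1)) ^ n * 2 ^ (n + 1) * A * K * (D powr (- T1) * t powr (- T2))"
proof -
  have "(D ^ M) ^ n * sqrt D * D powr (- N) = D powr (real M * n) * D powr (1/2) * D powr (- N)"
    using D by (simp add: powr_half_sqrt power_mult[symmetric] powr_realpow flip: of_nat_mult)
  also have "\<dots> = D powr (real M * n + 1/2 + - N)" by (simp only: powr_add)
  also have "\<dots> \<le> D powr (- T1)" using D N by (intro powr_mono) (auto simp: mult.commute)
  finally have D_part: "(D ^ M) ^ n * sqrt D * D powr (- N) \<le> D powr (- T1)" .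
  have "((2 * t) ^ M) ^ n = (2 * t) powr (real M * n)"
    using t by (simp add: power_mult[symmetric] power_mult_distrib powr_realpow flip: of_nat_mult)
  also have "\<dots> = (2 * t) powr (real n * M + T2) * (2 * t) powr (- T2)"
    by (simp add: powr_add[symmetric] mult.commute)
  finally have "((2 * t) ^ M) ^ n * E = (2 * t) powr (real n * M + T2) * E * (2 * t) powr (- T2)"
    by simp
  also have "\<dots> \<le> K * (2 * t) powr (- T2)" using K by (intro mult_right_mono) auto
  also have "\<dots> \<le> K * t powr (- T2)"
  proof (rule mult_left_mono)
    show "(2 * t) powr (- T2) \<le> t powr (- T2)" using t T2 by (intro powr_mono2') auto
    show "0 \<le> K" using K E by (meson order_trans powr_ge_zero zero_le_mult_iff)
  qed
  finally have t_part: "((2 * t) ^ M) ^ n * E \<le> K * t powr (- T2)" .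
  have "(D ^ M * (2 * t) ^ M) ^ n * (sqrt D * E * D powr (- N))
      = ((D ^ M) ^ n * sqrt D * D powr (- N)) * (((2 * t) ^ M) ^ n * E)"
    by (simp add: power_mult_distrib ac_simps)
  also have "\<dots> \<le> D powr (- T1) * (K * t powr (- T2))"
    by (rule mult_mono[OF D_part t_part]) (use E t in auto)
  finally have "(4 * (real n + 1)) ^ n * 2 ^ (n + 1) * A * ((D ^ M * (2 * t) ^ M) ^ n * (sqrt D * E * D powr (- N)))
      \<le> (4 * (real n + 1)) ^ n * 2 ^ (n + 1) * A * (D powr (- T1) * (K * t powr (- T2)))"
    using A by (intro mult_left_mono) auto
  then show ?thesis unfolding S by (simp add: power_mult_distrib ac_simps)
qed

lemma finite_difference_remainder_term_le:
  fixes D t T1 T2 S :: real and n M :: nat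
  assumes D: "1 \<le> D" and t: "1 \<le> 2 * t" and T2: "0 \<le> T2"
    and M: "real n + 2 + T1 \<le> M" "T2 \<le> M"
    and S: "S = 4 * (real n + 1) * D ^ M * (2 * t) ^ M"
  shows "S ^ n * (n * (pi * D / S) ^ (n + 1) * ((D + 1) / 2))
    \<le> n * pi ^ (n + 1) * (D powr (- T1) * t powr (- T2))"
proof -
  have DM: "0 < D ^ M * (2 * t) ^ M" using D t by simp
  then have S_ge: "D ^ M * (2 * t) ^ M \<le> S"
    unfolding S using mult_right_mono[of 1 "4 * (real n + 1)" "D ^ M * (2 * t) ^ M"]
    by (simp add: mult.assoc)
  have "S ^ n * (n * (pi * D / S) ^ (n + 1) * ((D + 1) / 2))
      = n * pi ^ (n + 1) * (D ^ (n + 1) * ((D + 1) / 2) / S)"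
    using DM S_ge by (simp add: power_divide power_mult_distrib field_simps)
  also have "D ^ (n + 1) * ((D + 1) / 2) / S \<le> D ^ (n + 2) / (D ^ M * (2 * t) ^ M)"
  proof (rule frac_le)
    show "D ^ (n + 1) * ((D + 1) / 2) \<le> D ^ (n + 2)" using D by (simp add: mult_left_mono)
  qed (use DM S_ge D in auto)
  also have "\<dots> = D powr (real (n + 2) - M) * (2 * t) powr (- real M)"
    using D t by (simp only: powr_diff powr_minus powr_realpow) (simp add: divide_simps)
  also have "\<dots> \<le> D powr (- T1) * t powr (- T2)"
  proof (rule mult_mono)
    show "D powr (real (n + 2) - M) \<le> D powr (- T1)" using D M by (intro powr_mono) auto
    have "(2 * t) powr (- real M) \<le> (2 * t) powr (- T2)" using t M by (intro powr_mono) auto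
    also have "\<dots> \<le> t powr (- T2)" using t T2 by (intro powr_mono2') auto
    finally show "(2 * t) powr (- real M) \<le> t powr (- T2)" .
  qed auto
  finally show ?thesis by (simp add: mult_left_mono)
qed

lemma finite_difference_step_le:
  fixes D t :: real and n M k :: nat
  assumes D: "1 \<le> D" and t: "1 \<le> 2 * t" and M: "1 \<le> M" and k: "k \<le> n"
  shows "real k * (1 / (4 * (real n + 1) * D ^ M * (2 * t) ^ M)) \<le> 1 / (4 * D)"
proof -
  have "D \<le> D ^ M" using power_increasing[of 1 M D] D M by simp
  moreover have "real k \<le> (2 * t) ^ M * (real n + 1)"
    using k one_le_power[OF t, of M] mult_mono[of 1 "(2 * t) ^ M" "real k" "real n + 1"] by simp
  ultimately have "D * real k \<le> D ^ M * ((2 * t) ^ M * (real n + 1))"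
    using D by (intro mult_mono) auto
  then have "real k * (4 * D) \<le> 4 * (real n + 1) * D ^ M * (2 * t) ^ M"
    using mult_left_mono[of _ _ 4] by (simp only: mult_ac)
  then show ?thesis using D t by (simp add: divide_simps)
qed

lemma higher_vderiv_fourier_decay:
  fixes \<Phi> :: "real \<Rightarrow> complex" and p a A T1 T2 K C D \<delta> \<xi> :: real and n M \<kappa> :: nat
  assumes p: "0 < p" and a: "0 < a" and A: "0 < A" and T: "0 \<le> T1" "0 \<le> T2"
    and M: "real n + 2 + T1 \<le> M" "T2 \<le> M"
    and K: "\<And>u. 0 \<le> u \<Longrightarrow> (1 + u) powr (real n * M + T2) * exp (- (a/2) * u powr p) \<le> K"
    and D: "2 \<le> D"
    and C: "2 \<le> C * ln D powr (1 / p)" "real n * M + 1/2 + T1 \<le> (a/2) * (C/4) powr p"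
    and cont: "continuous_on UNIV \<Phi>" and supp: "\<And>x. \<bar>x\<bar> > D / 2 \<Longrightarrow> \<Phi> x = 0"
    and L2: "integral UNIV (\<lambda>x. (cmod (\<Phi> x))\<^sup>2) = 1" and \<delta>: "0 < \<delta>" "\<delta> \<le> D"
    and envelope: "\<And>\<xi>. cmod (fourier \<Phi> \<xi>) \<le> frequency_envelope A a p \<delta> \<kappa> \<xi>"
    and \<kappa>: "real \<kappa> < \<delta> - C * ln D powr (1 / p)" and \<xi>: "1/2 < \<bar>\<xi>\<bar>"
  shows "cmod (higher_vderiv n (fourier \<Phi>) \<xi>)
    \<le> ((4 * (real n + 1)) ^ n * 2 ^ (n + 1) * A * K + n * pi ^ (n + 1)) / (D powr T1 * \<bar>\<xi>\<bar> powr T2)"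
proof -
  define t where "t = \<bar>\<xi>\<bar>"
  define S where "S = 4 * (real n + 1) * D ^ M * (2 * t) ^ M"
  define E where "E = exp (- (a/2) * (2 * t - 1) powr p)"
  define N where "N = (a/2) * (C/4) powr p"
  have t: "1 \<le> 2 * t" using \<xi> unfolding t_def by simp
  have S_pos: "0 < S" unfolding S_def using D t by simp
  have "1 \<le> M" using M(1) T(1) by linarith
  have samples: "cmod (fourier \<Phi> (\<xi> + real k * (1 / S))) \<le> 2 * sqrt D * A * E * D powr (- N)"
    if "k \<le> n" for k
  proof (rule order_trans[OF envelope])
    have step: "real k * (1 / S) \<le> 1 / (4 * D)"
      unfolding S_def using finite_difference_step_le[OF _ t \<open>1 \<le> M\<close> that] D by simp
    show "frequency_envelope A a p \<delta> \<kappa> (\<xi> + real k * (1 / S)) \<le> 2 * sqrt D * A * E * D powr (- N)"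
      unfolding E_def N_def t_def
      by (rule frequency_envelope_shift_le[OF p _ _ D \<delta> C(1) \<kappa> \<xi>]) (use a A S_pos step in auto)
  qed
  have "(1 / S) ^ n * cmod (higher_vderiv n (fourier \<Phi>) \<xi>)
      \<le> 2 ^ n * (2 * sqrt D * A * E * D powr (- N)) + n * (2 * pi * (1 / S) * (D / 2)) ^ (n + 1) * (D / 2 + 1/2)"
    by (rule higher_vderiv_fourier_le_sample_bound[where R = "D / 2"])
      (use cont supp L2 D S_pos samples in auto)
  also have "\<dots> = 2 ^ (n + 1) * (sqrt D * A * E * D powr (- N)) + n * (pi * D / S) ^ (n + 1) * ((D + 1) / 2)"
    by (simp add: add_divide_distrib)
  finally have "S ^ n * ((1 / S) ^ n * cmod (higher_vderiv n (fourier \<Phi>) \<xi>))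
      \<le> S ^ n * (2 ^ (n + 1) * (sqrt D * A * E * D powr (- N)) + n * (pi * D / S) ^ (n + 1) * ((D + 1) / 2))"
    using S_pos by (intro mult_left_mono) auto
  then have "cmod (higher_vderiv n (fourier \<Phi>) \<xi>)
      \<le> S ^ n * (2 ^ (n + 1) * (sqrt D * A * E * D powr (- N)))
        + S ^ n * (n * (pi * D / S) ^ (n + 1) * ((D + 1) / 2))"
    using S_pos by (simp add: power_one_over distrib_left)
  also have "\<dots> \<le> (4 * (real n + 1)) ^ n * 2 ^ (n + 1) * A * K * (D powr (- T1) * t powr (- T2))
      + n * pi ^ (n + 1) * (D powr (- T1) * t powr (- T2))"
    using D t T A E_def K[of "2 * t - 1"] C(2) M S_def unfolding N_def
    by (intro add_mono finite_difference_sample_term_le finite_difference_remainder_term_le) auto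
  also have "\<dots> = ((4 * (real n + 1)) ^ n * 2 ^ (n + 1) * A * K + n * pi ^ (n + 1))
      / (D powr T1 * \<bar>\<xi>\<bar> powr T2)"
    unfolding t_def using D \<xi> by (simp add: powr_minus field_simps)
  finally show ?thesis .
qed

lemma decay_constant_exists:
  fixes p a N :: real
  assumes p: "0 < p" and a: "0 < a"
  shows "\<exists>C. 0 < C \<and> (\<forall>D\<ge>2. 2 \<le> C * ln D powr (1 / p)) \<and> N \<le> (a/2) * (C/4) powr p"
proof -
  define C where "C = 2 / ln 2 powr (1 / p) + 4 * (2 * max N 0 / a) powr (1 / p)"
  have l2: "0 < ln 2 powr (1 / p)" by simp
  then have "0 < C" unfolding C_def by (intro add_pos_nonneg) auto
  have "2 \<le> C * ln D powr (1 / p)" if "2 \<le> D" for D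
  proof -
    have "2 = 2 / ln 2 powr (1 / p) * ln 2 powr (1 / p)" using l2 by simp
    also have "\<dots> \<le> C * ln D powr (1 / p)"
      unfolding C_def using l2 that p by (intro mult_mono powr_mono2) auto
    finally show ?thesis .
  qed
  moreover have "(2 * max N 0 / a) powr (1 / p) \<le> C / 4" unfolding C_def using l2 by simp
  then have "((2 * max N 0 / a) powr (1 / p)) powr p \<le> (C / 4) powr p"
    using p by (intro powr_mono2) auto
  then have "2 * max N 0 / a \<le> (C / 4) powr p" using p a by (simp add: powr_powr)
  then have "N \<le> (a/2) * (C/4) powr p" using a by (simp add: field_simps)
  ultimately show ?thesis using \<open>0 < C\<close> by blast
qed

theorem corollary2:
  fixes \<eta> A a :: real and T1 T2 :: real and n :: nat
  assumes "0 < \<eta>" "\<eta> < 1" "A > 0" "a > 0" "T1 \<ge> 0" "T2 \<ge> 0"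
  shows "\<exists>C c :: real. C > 0 \<and> c > 0 \<and>
    (\<forall>(D::real) (\<Phi> :: 'j \<Rightarrow> nat \<Rightarrow> real \<Rightarrow> complex) (\<delta> :: 'j \<Rightarrow> real).
      D \<ge> 2
      \<and> (\<forall>j \<kappa>. smooth_fun (\<Phi> j \<kappa>))
      \<and> (\<forall>j \<kappa> x. \<bar>x\<bar> > D / 2 \<longrightarrow> \<Phi> j \<kappa> x = 0)
      \<and> (\<forall>j \<kappa>. integral UNIV (\<lambda>x. (cmod (\<Phi> j \<kappa> x))\<^sup>2) = 1)
      \<and> (\<forall>j. 0 < \<delta> j \<and> \<delta> j \<le> D)
      \<and> (\<forall>j \<kappa> \<xi>. cmod (fourier (\<Phi> j \<kappa>) \<xi>) \<le>
            sqrt (\<delta> j) * A *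
              (exp (- a * (\<delta> j * \<bar>\<xi> - (2 * real \<kappa> + 1) / (4 * \<delta> j)\<bar>) powr (1 - \<eta>))
             + exp (- a * (\<delta> j * \<bar>\<xi> + (2 * real \<kappa> + 1) / (4 * \<delta> j)\<bar>) powr (1 - \<eta>))))
      \<longrightarrow> (\<forall>j \<kappa> \<xi>. real \<kappa> < \<delta> j - C * (ln D) powr (1 / (1 - \<eta>)) \<and> \<bar>\<xi>\<bar> > 1 / 2 \<longrightarrow>
            cmod (higher_vderiv n (fourier (\<Phi> j \<kappa>)) \<xi>) \<le> c / (D powr T1 * \<bar>\<xi>\<bar> powr T2)))"
proof -
  have p: "0 < 1 - \<eta>" using assms(2) by simp
  obtain M :: nat where "real n + 2 + T1 + T2 \<le> M" using real_arch_simple by blast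
  then have M: "real n + 2 + T1 \<le> M" "T2 \<le> M" using assms(5,6) by auto
  obtain K where K: "K > 0"
    "\<And>u. 0 \<le> u \<Longrightarrow> (1 + u) powr (real n * M + T2) * exp (- (a/2) * u powr (1 - \<eta>)) \<le> K"
    using powr_mult_exp_neg_powr_bounded[of "a/2" "1 - \<eta>" "real n * M + T2"] p assms(4,6) by auto
  obtain C where "0 < C" and C: "\<forall>D\<ge>2. 2 \<le> C * ln D powr (1 / (1 - \<eta>))"
    "real n * M + 1/2 + T1 \<le> (a/2) * (C/4) powr (1 - \<eta>)"
    using decay_constant_exists[OF p assms(4)] by blast
  define c where "c = (4 * (real n + 1)) ^ n * 2 ^ (n + 1) * A * K + n * pi ^ (n + 1)"
  have "0 < c" unfolding c_def using assms(3) K(1) by (intro add_pos_nonneg) auto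
  show ?thesis
    by (intro exI[of _ C] exI[of _ c] conjI allI impI \<open>0 < C\<close> \<open>0 < c\<close>, elim conjE,
        unfold c_def, rule higher_vderiv_fourier_decay[OF p assms(4,3,5,6) M K(2) _ _ C(2)])
      (auto simp: C frequency_envelope_def smooth_fun_imp_continuous_on)
qed

end
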